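(* Every natural-number-valued sequence $F$ in the family $\mathcal{T}_\lambda(\alpha,\beta)$ (restricted to its terms $n_F$, $n\ge1$) belongs to $\mathcal{T}_\lambda$; consequently every such $F$ is a cobweb tiling sequence. Moreover the inclusion $\mathcal{T}_\lambda(\alpha,\beta)\subset\mathcal{T}_\lambda$ is proper: the Fibonacci sequence belongs to $\mathcal{T}_\lambda$ but not to $\mathcal{T}_\lambda(\alpha,\beta)$.
   Context: Throughout, $\mathbb{N}=\{1,2,\dots\}$. The family $\mathcal{T}_\lambda$ consists of sequences $F=(n_F)_{n\ge1}$ of natural numbers for which there exist functions $\lambda_K,\lambda_M:\mathbb{N}\times\mathbb{N}\to\mathbb{N}\cup\{0\}$ such that $(k+m)_F=\lambda_K(k,m)k_F+\lambda_M(k,m)m_F$ for all $k,m\in\mathbb{N}$. The family $\mathcal{T}_\lambda(\alpha,\beta)$ consists of sequences with $n_F=[x^n]\frac{1_F\,x}{(1-\alpha x)(1-\beta x)}$, for some $\alpha,\beta\in\mathbb{N}\cup\{0\}$ and $1_F\in\mathbb{N}$. The Fibonacci sequence is $F_0=0$, $F_1=F_2=1$, $F_{n+1}=F_n+F_{n-1}$. For a sequence $F$ of natural numbers, write $[s_F]=\{1,\dots,s_F\}$, $n_F!=n_F\cdots1_F$ with $0_F!=1$, and $\binom{n}{m}_F=\frac{n_F!}{m_F!(n-m)_F!}$. $F$ is admissible if all $\binom{n}{m}_F\in\mathbb{N}\cup\{0\}$. For $1\le m\le n$ and $k=n-m+1$, the $F$-box is $V_{m,n}=[k_F]\times\cdots\times[n_F]$.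 A sub-box of the form $\sigma V_m$ ($\sigma$ a permutation of $\{1,\dots,m\}$) is $A_1\times\cdots\times A_m$ with $A_s\subseteq[(k+s-1)_F]$ and $|A_s|=(\sigma(s))_F$. A tiling of $V_{m,n}$ is a family of pairwise disjoint such sub-boxes ($\sigma$ may vary) with union $V_{m,n}$. $F$ is a cobweb tiling sequence if it is admissible and every $V_{m,n}$, $1\le m\le n$, has a tiling. *)

theory Defs
  imports "HOL-Computational_Algebra.Formal_Power_Series"
          "HOL-Combinatorics.Permutations"
          "HOL-Number_Theory.Fib"
begin

text \<open>Sequences F = (n_F) are modelled as functions nat => nat; only the values F n
  for n >= 1 are relevant. "Sequence of natural numbers" (N = {1,2,...}) means F n >= 1
  for all n >= 1.\<close>

definition nat_seq :: "(nat \<Rightarrow> nat) \<Rightarrow> bool" where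
  "nat_seq F \<longleftrightarrow> (\<forall>n\<ge>1. F n \<ge> 1)"

definition T_lambda :: "(nat \<Rightarrow> nat) set" where
  "T_lambda = {F. nat_seq F \<and>
     (\<exists>lamK lamM :: nat \<Rightarrow> nat \<Rightarrow> nat. \<forall>k\<ge>1. \<forall>m\<ge>1.
        F (k + m) = lamK k m * F k + lamM k m * F m)}"

definition T_lambda_ab :: "(nat \<Rightarrow> nat) set" where
  "T_lambda_ab = {F. nat_seq F \<and>
     (\<exists>(\<alpha>::nat) (\<beta>::nat) (c::nat). c \<ge> 1 \<and>
        (\<forall>n\<ge>1. of_nat (F n) =
           fps_nth (fps_const (of_nat c :: rat) * fps_X /
             ((1 - fps_const (of_nat \<alpha>) * fps_X) * (1 - fps_const (of_nat \<beta>) * fps_X))) n))}"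

definition F_fact :: "(nat \<Rightarrow> nat) \<Rightarrow> nat \<Rightarrow> nat" where
  "F_fact F n = (\<Prod>k\<in>{1..n}. F k)"

definition admissible :: "(nat \<Rightarrow> nat) \<Rightarrow> bool" where
  "admissible F \<longleftrightarrow> (\<forall>n m. m \<le> n \<longrightarrow> F_fact F m * F_fact F (n - m) dvd F_fact F n)"

definition F_box :: "(nat \<Rightarrow> nat) \<Rightarrow> nat \<Rightarrow> nat \<Rightarrow> (nat \<Rightarrow> nat) set" where
  "F_box F m n = PiE {1..m} (\<lambda>s. {1..F (n - m + s)})"

definition sub_box :: "(nat \<Rightarrow> nat) \<Rightarrow> nat \<Rightarrow> nat \<Rightarrow> (nat \<Rightarrow> nat) set \<Rightarrow> bool" where
  "sub_box F m n B \<longleftrightarrow> (\<exists>\<sigma> A. \<sigma> permutes {1..m} \<and>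
      (\<forall>s\<in>{1..m}. A s \<subseteq> {1..F (n - m + s)} \<and> card (A s) = F (\<sigma> s)) \<and>
      B = PiE {1..m} A)"

definition has_tiling :: "(nat \<Rightarrow> nat) \<Rightarrow> nat \<Rightarrow> nat \<Rightarrow> bool" where
  "has_tiling F m n \<longleftrightarrow> (\<exists>T. (\<forall>B\<in>T. sub_box F m n B) \<and> pairwise disjnt T \<and>
      \<Union>T = F_box F m n)"

definition cobweb_tiling :: "(nat \<Rightarrow> nat) \<Rightarrow> bool" where
  "cobweb_tiling F \<longleftrightarrow> admissible F \<and> (\<forall>m n. 1 \<le> m \<and> m \<le> n \<longrightarrow> has_tiling F m n)"

end

theory Submission
  imports Defs
begin

text \<open>Everything rests on the property that \<open>F (k + m)\<close> is a nonnegative integer combination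
  \<open>a F k + b F m\<close>. It gives \<open>k\<^sub>F! m\<^sub>F! dvd (k + m)\<^sub>F!\<close>: both summands of
  \<open>(k + m)\<^sub>F! = (a F k + b F m) (k + m - 1)\<^sub>F!\<close> are multiples of \<open>k\<^sub>F! m\<^sub>F!\<close> by induction.
  It also tiles the box \<open>V(m, n)\<close>: with \<open>k = n - m + 1\<close>, cut its last side, of length
  \<open>F n = a F k + b F m\<close>, into segments of lengths \<open>F k\<close> and \<open>F m\<close>. The slab over a segment of
  length \<open>F k\<close> is a box of the shape of \<open>V(m, n - 1)\<close>, and the slab over a segment of length
  \<open>F m\<close> is a box of the shape of \<open>V(m - 1, n - 1)\<close> times that segment, so induction on \<open>n\<close>
  tiles both.
  A sequence of \<open>T\<^sub>\<lambda>(\<alpha>, \<beta>)\<close> is \<open>n\<^sub>F = c (\<alpha>\<^sup>n\<^sup>-\<^sup>1 + \<alpha>\<^sup>n\<^sup>-\<^sup>2 \<beta> + \<dots> + \<beta>\<^sup>n\<^sup>-\<^sup>1)\<close>, so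
  \<open>(k + m)\<^sub>F = \<alpha>\<^sup>m k\<^sub>F + \<beta>\<^sup>k m\<^sub>F\<close>. Fibonacci has \<open>F (k + m) = F (m - 1) F k + F (k + 1) F m\<close>,
  but it is not of that form: \<open>F 1 = F 2 = 1\<close> force \<open>c = 1\<close> and \<open>\<alpha> + \<beta> = 1\<close>, whence
  \<open>F 3 = \<alpha>\<^sup>2 + \<beta> \<le> 1\<close>.\<close>

definition lambda_decomposable :: "(nat \<Rightarrow> nat) \<Rightarrow> bool" where
  "lambda_decomposable F \<longleftrightarrow> (\<forall>k\<ge>1. \<forall>m\<ge>1. \<exists>a b. F (k + m) = a * F k + b * F m)"

lemma T_lambda_iff: "F \<in> T_lambda \<longleftrightarrow> nat_seq F \<and> lambda_decomposable F"
proof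
  assume "F \<in> T_lambda"
  then show "nat_seq F \<and> lambda_decomposable F"
    unfolding T_lambda_def lambda_decomposable_def by blast
next
  assume F: "nat_seq F \<and> lambda_decomposable F"
  define lamK where "lamK k m = (SOME a. \<exists>b. F (k + m) = a * F k + b * F m)" for k m
  define lamM where "lamM k m = (SOME b. F (k + m) = lamK k m * F k + b * F m)" for k m
  have "F (k + m) = lamK k m * F k + lamM k m * F m" if "1 \<le> k" "1 \<le> m" for k m
  proof -
    have "\<exists>a b. F (k + m) = a * F k + b * F m"
      using F that unfolding lambda_decomposable_def by blast
    then have "\<exists>b. F (k + m) = lamK k m * F k + b * F m"
      unfolding lamK_def by (rule someI_ex)
    then show ?thesis
      unfolding lamM_def by (rule someI_ex)
  qed
  then show "F \<in> T_lambda"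
    using F unfolding T_lambda_def by blast
qed

text \<open>\<open>lucas_U a b n = \<Sum>i<n. a\<^sup>i b\<^sup>n\<^sup>-\<^sup>1\<^sup>-\<^sup>i\<close>, the Lucas sequence \<open>U\<^sub>n(a + b, a b)\<close>.\<close>

fun lucas_U :: "nat \<Rightarrow> nat \<Rightarrow> nat \<Rightarrow> nat" where
  "lucas_U a b 0 = 0"
| "lucas_U a b (Suc n) = a ^ n + b * lucas_U a b n"

lemma lucas_U_add: "lucas_U a b (k + m) = a ^ m * lucas_U a b k + b ^ k * lucas_U a b m"
  by (induction k) (auto simp: algebra_simps power_add)

lemma lucas_U_rec:
  "lucas_U a b (Suc (Suc n)) + a * b * lucas_U a b n = (a + b) * lucas_U a b (Suc n)"
  by (simp add: algebra_simps)

lemma fps_nth_lucas_U: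
  "fps_nth (fps_const (of_nat c :: 'a::field) * fps_X /
     ((1 - fps_const (of_nat a) * fps_X) * (1 - fps_const (of_nat b) * fps_X))) n
   = of_nat (c * lucas_U a b n)"
proof -
  define D :: "'a fps" where
    "D = (1 - fps_const (of_nat a) * fps_X) * (1 - fps_const (of_nat b) * fps_X)"
  define U :: "'a fps" where "U = Abs_fps (\<lambda>n. of_nat (lucas_U a b n))"
  have ring: "G * ((1 - p * x) * (1 - q * x)) = G - (p + q) * (x * G) + p * q * (x * (x * G))"
    for G p q x :: "'a fps"
    by (simp add: algebra_simps)
  have UD: "U * D = U - fps_const (of_nat (a + b)) * (fps_X * U)
                  + fps_const (of_nat (a * b)) * (fps_X * (fps_X * U))"
    by (simp only: D_def ring of_nat_add of_nat_mult fps_const_add fps_const_mult)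
  have "U * D = fps_X"
  proof (rule fps_ext)
    fix n
    consider "n = 0" | "n = 1" | k where "n = Suc (Suc k)"
      by (metis One_nat_def not0_implies_Suc)
    then show "fps_nth (U * D) n = fps_nth fps_X n"
    proof cases
      case 3
      have "of_nat (lucas_U a b (Suc (Suc k))) + of_nat a * of_nat b * of_nat (lucas_U a b k)
            = (of_nat a + of_nat b) * (of_nat (lucas_U a b (Suc k)) :: 'a)"
        using arg_cong[OF lucas_U_rec[of a b k], of "of_nat :: nat \<Rightarrow> 'a"]
        by (simp del: lucas_U.simps)
      then show ?thesis
        unfolding UD by (simp add: 3 U_def diff_add_eq del: lucas_U.simps)
    qed (unfold UD, simp_all add: U_def)
  qed
  moreover have "D \<noteq> 0"
  proof
    assume "D = 0"
    then have "fps_nth D 0 = 0" by simp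
    then show False by (simp add: D_def)
  qed
  ultimately have "fps_const (of_nat c) * fps_X / D = fps_const (of_nat c) * U"
    by (metis fps_divide_times_eq mult.assoc)
  then show ?thesis
    by (simp add: D_def U_def)
qed

lemma T_lambda_ab_lucas_U:
  assumes "F \<in> T_lambda_ab"
  obtains c a b where "\<And>n. 1 \<le> n \<Longrightarrow> F n = c * lucas_U a b n"
proof -
  obtain c a b where "\<forall>n\<ge>1. of_nat (F n) =
      fps_nth (fps_const (of_nat c :: rat) * fps_X /
        ((1 - fps_const (of_nat a) * fps_X) * (1 - fps_const (of_nat b) * fps_X))) n"
    using assms unfolding T_lambda_ab_def by blast
  then have "F n = c * lucas_U a b n" if "1 \<le> n" for n
    using that unfolding fps_nth_lucas_U of_nat_eq_iff by blast
  then show ?thesis using that by blast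
qed

lemma lambda_decomposable_lucas_multiple:
  assumes "\<And>n. 1 \<le> n \<Longrightarrow> F n = c * lucas_U a b n"
  shows "lambda_decomposable F"
  unfolding lambda_decomposable_def
proof (intro allI impI)
  fix k m :: nat
  assume "1 \<le> k" "1 \<le> m"
  then have "F (k + m) = a ^ m * F k + b ^ k * F m"
    using assms[of k] assms[of m] assms[of "k + m"] lucas_U_add[of a b k m]
    by (simp add: algebra_simps)
  then show "\<exists>x y. F (k + m) = x * F k + y * F m" by blast
qed

lemma T_lambda_ab_subset_T_lambda: "T_lambda_ab \<subseteq> T_lambda"
proof
  fix F assume F: "F \<in> T_lambda_ab"
  then obtain c a b where "\<And>n. 1 \<le> n \<Longrightarrow> F n = c * lucas_U a b n"
    using T_lambda_ab_lucas_U by blast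
  then have "lambda_decomposable F"
    by (rule lambda_decomposable_lucas_multiple)
  moreover have "nat_seq F" using F unfolding T_lambda_ab_def by blast
  ultimately show "F \<in> T_lambda" by (simp add: T_lambda_iff)
qed

lemma fib_in_T_lambda: "fib \<in> T_lambda"
proof -
  have "nat_seq fib"
    unfolding nat_seq_def using fib_neq_0_nat by (auto simp: Suc_le_eq)
  moreover have "lambda_decomposable fib"
    unfolding lambda_decomposable_def
  proof (intro allI impI)
    fix k m :: nat
    assume "1 \<le> k" "1 \<le> m"
    then have "fib (k + m) = fib (m - 1) * fib k + fib (Suc k) * fib m"
      using fib_add[of "m - 1" k] by (simp add: algebra_simps)
    then show "\<exists>a b. fib (k + m) = a * fib k + b * fib m" by blast
  qed
  ultimately show ?thesis by (simp add: T_lambda_iff)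
qed

lemma fib_notin_T_lambda_ab: "fib \<notin> T_lambda_ab"
proof
  assume "fib \<in> T_lambda_ab"
  then obtain c a b where F: "\<And>n. 1 \<le> n \<Longrightarrow> fib n = c * lucas_U a b n"
    using T_lambda_ab_lucas_U by blast
  have "c = 1" using F[of 1] by simp
  moreover have "a + b = 1" using F[of 2] \<open>c = 1\<close> by (simp add: numeral_2_eq_2)
  moreover have "a * a + b * (a + b) = 2"
    using F[of 3] \<open>c = 1\<close> by (simp add: numeral_3_eq_3 numeral_2_eq_2)
  ultimately show False by (cases a) auto
qed

lemma F_fact_Suc: "F_fact F (Suc n) = F (Suc n) * F_fact F n"
  unfolding F_fact_def by (simp add: mult.commute)

lemma F_fact_mult_dvd:
  assumes "lambda_decomposable F"
  shows "F_fact F k * F_fact F m dvd F_fact F (k + m)"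
proof (induction "k + m" arbitrary: k m)
  case 0
  then show ?case by (simp add: F_fact_def)
next
  case (Suc n)
  show ?case
  proof (cases "k = 0 \<or> m = 0")
    case True
    then show ?thesis by (auto simp: F_fact_def)
  next
    case False
    then obtain k' m' where km: "k = Suc k'" "m = Suc m'" by (metis not0_implies_Suc)
    then have "1 \<le> k" "1 \<le> m" by auto
    then obtain a b where F: "F (k + m) = a * F k + b * F m"
      using assms unfolding lambda_decomposable_def by blast
    have "F_fact F k * F_fact F m dvd F k * F_fact F (k' + m)"
      using Suc.hyps(1)[of k' m] Suc.hyps(2) km by (simp add: F_fact_Suc mult.assoc)
    moreover have "F_fact F k * F_fact F m dvd F m * F_fact F (k + m')"
      using Suc.hyps(1)[of k m'] Suc.hyps(2) km by (simp add: F_fact_Suc mult_ac)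
    moreover have "F_fact F (k + m) = a * (F k * F_fact F (k' + m)) + b * (F m * F_fact F (k + m'))"
      using F km by (simp add: F_fact_Suc algebra_simps)
    ultimately show ?thesis by simp
  qed
qed

lemma lambda_decomposable_imp_admissible:
  assumes "lambda_decomposable F"
  shows "admissible F"
  unfolding admissible_def
proof (intro allI impI)
  fix n m :: nat
  assume "m \<le> n"
  then show "F_fact F m * F_fact F (n - m) dvd F_fact F n"
    using F_fact_mult_dvd[of F m "n - m"] assms by simp
qed

definition tiles :: "('a set \<Rightarrow> bool) \<Rightarrow> 'a set \<Rightarrow> bool" where
  "tiles P S \<longleftrightarrow> (\<exists>T. (\<forall>B\<in>T. P B) \<and> pairwise disjnt T \<and> \<Union>T = S)"

lemma has_tiling_iff_tiles: "has_tiling F m n \<longleftrightarrow> tiles (sub_box F m n) (F_box F m n)"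
  by (simp add: has_tiling_def tiles_def)

lemma tiles_empty: "tiles P {}"
  unfolding tiles_def by (intro exI[of _ "{}"]) auto

lemma tiles_singleton: "P S \<Longrightarrow> tiles P S"
  unfolding tiles_def by (intro exI[of _ "{S}"]) auto

lemma tiles_mono: "tiles P S \<Longrightarrow> (\<And>B. P B \<Longrightarrow> B \<subseteq> S \<Longrightarrow> Q B) \<Longrightarrow> tiles Q S"
  unfolding tiles_def by blast

lemma tiles_UN:
  assumes "\<And>j. j \<in> J \<Longrightarrow> tiles P (S j)" "disjoint_family_on S J"
  shows "tiles P (\<Union>j\<in>J. S j)"
proof -
  from assms(1) have "\<forall>j\<in>J. \<exists>T. (\<forall>B\<in>T. P B) \<and> pairwise disjnt T \<and> \<Union>T = S j"
    unfolding tiles_def by blast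
  then obtain T where T: "\<And>j. j \<in> J \<Longrightarrow> (\<forall>B\<in>T j. P B) \<and> pairwise disjnt (T j) \<and> \<Union>(T j) = S j"
    by metis
  have "pairwise disjnt (\<Union>j\<in>J. T j)"
  proof (rule pairwiseI)
    fix B B' assume "B \<in> (\<Union>j\<in>J. T j)" "B' \<in> (\<Union>j\<in>J. T j)" "B \<noteq> B'"
    then obtain i j where ij: "i \<in> J" "j \<in> J" "B \<in> T i" "B' \<in> T j" by blast
    show "disjnt B B'"
    proof (cases "i = j")
      case True
      then show ?thesis using T[OF \<open>i \<in> J\<close>] ij \<open>B \<noteq> B'\<close> by (auto simp: pairwise_def)
    next
      case False
      then have "disjnt (S i) (S j)"
        using assms(2) ij by (auto simp: disjoint_family_on_def disjnt_def)
      moreover have "B \<subseteq> S i" "B' \<subseteq> S j" using T ij by blast+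
      ultimately show ?thesis by (auto simp: disjnt_def)
    qed
  qed
  moreover have "\<Union>(\<Union>j\<in>J. T j) = (\<Union>j\<in>J. S j)"
  proof -
    have "\<Union>(\<Union>j\<in>J. T j) = (\<Union>j\<in>J. \<Union>(T j))" by blast
    also have "\<dots> = (\<Union>j\<in>J. S j)" by (rule SUP_cong) (use T in auto)
    finally show ?thesis .
  qed
  ultimately show ?thesis
    unfolding tiles_def using T by (intro exI[of _ "\<Union>j\<in>J. T j"]) auto
qed

lemma tiles_Un:
  assumes "tiles P A" "tiles P B" "disjnt A B"
  shows "tiles P (A \<union> B)"
proof -
  have "tiles P (\<Union>j\<in>{True, False}. if j then A else B)"
    using assms by (intro tiles_UN) (auto simp: disjoint_family_on_def disjnt_def)
  then show ?thesis by (simp add: Un_commute)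
qed

lemma tiles_image:
  assumes "tiles P S" "inj_on h S" "\<And>B. P B \<Longrightarrow> B \<subseteq> S \<Longrightarrow> Q (h ` B)"
  shows "tiles Q (h ` S)"
proof -
  obtain T where T: "\<forall>B\<in>T. P B" "pairwise disjnt T" "\<Union>T = S"
    using assms(1) unfolding tiles_def by blast
  have "pairwise disjnt ((`) h ` T)"
    using T assms(2) unfolding pairwise_def disjnt_def inj_on_def by blast
  then show ?thesis
    unfolding tiles_def using T assms(3) by (intro exI[of _ "(`) h ` T"]) auto
qed

lemma tiles_Times:
  assumes "tiles P S" "\<And>B. P B \<Longrightarrow> B \<subseteq> S \<Longrightarrow> Q (Y \<times> B)"
  shows "tiles Q (Y \<times> S)"
proof -
  obtain T where T: "\<forall>B\<in>T. P B" "pairwise disjnt T" "\<Union>T = S"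
    using assms(1) unfolding tiles_def by blast
  have "pairwise disjnt ((\<times>) Y ` T)"
    using T unfolding pairwise_def disjnt_def by blast
  then show ?thesis
    unfolding tiles_def using T assms(2) by (intro exI[of _ "(\<times>) Y ` T"]) auto
qed

lemma tiles_card_multiple:
  "finite X \<Longrightarrow> card X = a * p \<Longrightarrow> tiles (\<lambda>Y. card Y = p) X"
proof (induction a arbitrary: X)
  case 0
  then show ?case by (simp add: tiles_empty)
next
  case (Suc a)
  obtain Y where Y: "Y \<subseteq> X" "card Y = p"
    using obtain_subset_with_card_n[of p X] Suc.prems by auto
  have "tiles (\<lambda>Y. card Y = p) (Y \<union> (X - Y))"
    using Y Suc by (intro tiles_Un tiles_singleton Suc.IH)
      (auto simp: card_Diff_subset finite_subset disjnt_def)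
  then show ?case using Y by (simp add: Un_absorb1)
qed

lemma tiles_card_lincomb:
  assumes "finite X" "card X = a * p + b * q"
  shows "tiles (\<lambda>Y. card Y = p \<or> card Y = q) X"
proof -
  obtain Y where Y: "Y \<subseteq> X" "card Y = a * p"
    using obtain_subset_with_card_n[of "a * p" X] assms by auto
  have "tiles (\<lambda>Y. card Y = p) Y" "tiles (\<lambda>Y. card Y = q) (X - Y)"
    using Y assms by (auto intro!: tiles_card_multiple simp: card_Diff_subset finite_subset)
  then have "tiles (\<lambda>Y. card Y = p \<or> card Y = q) (Y \<union> (X - Y))"
    by (intro tiles_Un) (auto elim!: tiles_mono simp: disjnt_def)
  then show ?thesis using Y by (simp add: Un_absorb1)
qed

lemma tiles_PiE_slices:
  assumes "tiles P (X i)" "i \<in> I" "\<And>Y. P Y \<Longrightarrow> Y \<subseteq> X i \<Longrightarrow> tiles Q (PiE I (X(i := Y)))"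
  shows "tiles Q (PiE I X)"
proof -
  obtain T where T: "\<forall>Y\<in>T. P Y" "pairwise disjnt T" "\<Union>T = X i"
    using assms(1) unfolding tiles_def by blast
  have "PiE I X = (\<Union>Y\<in>T. PiE I (X(i := Y)))"
  proof
    show "PiE I X \<subseteq> (\<Union>Y\<in>T. PiE I (X(i := Y)))"
    proof
      fix f assume f: "f \<in> PiE I X"
      then obtain Y where "Y \<in> T" "f i \<in> Y" using T(3) assms(2) by blast
      with f show "f \<in> (\<Union>Y\<in>T. PiE I (X(i := Y)))" by (auto simp: PiE_iff)
    qed
    show "(\<Union>Y\<in>T. PiE I (X(i := Y))) \<subseteq> PiE I X"
      using T(3) by (intro UN_least PiE_mono) auto
  qed
  moreover have "disjoint_family_on (\<lambda>Y. PiE I (X(i := Y))) T"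
    using T(2) assms(2)
    unfolding disjoint_family_on_def pairwise_def disjnt_def by (fastforce simp: PiE_iff)
  moreover have "tiles Q (PiE I (X(i := Y)))" if "Y \<in> T" for Y
    using assms(3) T that by blast
  ultimately show ?thesis by (metis tiles_UN)
qed

lemma tiles_PiE_insert:
  assumes "tiles P (PiE J X)" "i \<notin> J"
    and "\<And>B. P B \<Longrightarrow> B \<subseteq> PiE J X \<Longrightarrow> Q ((\<lambda>(y, f). f(i := y)) ` (Y \<times> B))"
  shows "tiles Q (PiE (insert i J) (X(i := Y)))"
proof -
  have "PiE J (X(i := Y)) = PiE J X"
    using assms(2) by (intro PiE_cong) auto
  then have "PiE (insert i J) (X(i := Y)) = (\<lambda>(y, f). f(i := y)) ` (Y \<times> PiE J X)"
    by (simp add: PiE_insert_eq)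
  moreover have "inj_on (\<lambda>(y, f). f(i := y)) (Y \<times> PiE J X)"
    using inj_combinator[of i J "X(i := Y)"] assms(2) \<open>PiE J (X(i := Y)) = PiE J X\<close> by simp
  ultimately show ?thesis
    using assms(1,3)
    by (auto intro!: tiles_image[where P = "\<lambda>C. \<exists>B. P B \<and> B \<subseteq> PiE J X \<and> C = Y \<times> B"]
        tiles_Times)
qed

lemma bij_betw_fun_upd_insert:
  "bij_betw f A B \<Longrightarrow> a \<notin> A \<Longrightarrow> b \<notin> B \<Longrightarrow> bij_betw (f(a := b)) (insert a A) (insert b B)"
  unfolding bij_betw_def inj_on_def by (auto simp: image_def)

definition perm_box :: "(nat \<Rightarrow> nat) \<Rightarrow> 'i set \<Rightarrow> ('i \<Rightarrow> 'a set) \<Rightarrow> ('i \<Rightarrow> 'a) set \<Rightarrow> bool" where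
  "perm_box F I X B \<longleftrightarrow> (\<exists>\<sigma> A. bij_betw \<sigma> I {1..card I} \<and>
      (\<forall>s\<in>I. A s \<subseteq> X s \<and> card (A s) = F (\<sigma> s)) \<and> B = PiE I A)"

lemma perm_box_PiE:
  "bij_betw g I {1..card I} \<Longrightarrow> (\<And>s. s \<in> I \<Longrightarrow> card (X s) = F (g s)) \<Longrightarrow> perm_box F I X (PiE I X)"
  unfolding perm_box_def by blast

lemma perm_box_mono:
  "perm_box F I X B \<Longrightarrow> (\<And>s. s \<in> I \<Longrightarrow> X s \<subseteq> X' s) \<Longrightarrow> perm_box F I X' B"
  unfolding perm_box_def by blast

lemma perm_box_insert:
  assumes "perm_box F J X B" "finite J" "i \<notin> J" "card Y = F (Suc (card J))"
  shows "perm_box F (insert i J) (X(i := Y)) ((\<lambda>(y, f). f(i := y)) ` (Y \<times> B))"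
proof -
  obtain \<sigma> A where \<sigma>: "bij_betw \<sigma> J {1..card J}"
    and A: "\<forall>s\<in>J. A s \<subseteq> X s \<and> card (A s) = F (\<sigma> s)" and B: "B = PiE J A"
    using assms(1) unfolding perm_box_def by blast
  have "bij_betw (\<sigma>(i := Suc (card J))) (insert i J) (insert (Suc (card J)) {1..card J})"
    using \<sigma> assms(3) by (intro bij_betw_fun_upd_insert) auto
  moreover have "insert (Suc (card J)) {1..card J} = {1..card (insert i J)}"
    using assms(2,3) by auto
  moreover have "PiE J (A(i := Y)) = PiE J A"
    using assms(3) by (intro PiE_cong) auto
  then have "(\<lambda>(y, f). f(i := y)) ` (Y \<times> B) = PiE (insert i J) (A(i := Y))"
    by (simp add: B PiE_insert_eq)
  ultimately show ?thesis
    unfolding perm_box_def using A assms(3,4)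
    by (intro exI[of _ "\<sigma>(i := Suc (card J))"] exI[of _ "A(i := Y)"]) auto
qed

text \<open>A box whose sides, in the order given by \<open>g\<close>, have the sizes
  \<open>F (n - card I + 1), \<dots>, F n\<close> of the sides of \<open>V(m, n)\<close> with \<open>m = card I\<close>; the induction needs this
  freedom to relabel the axes.\<close>

definition F_box_shape ::
    "(nat \<Rightarrow> nat) \<Rightarrow> nat \<Rightarrow> 'i set \<Rightarrow> ('i \<Rightarrow> 'a set) \<Rightarrow> ('i \<Rightarrow> nat) \<Rightarrow> bool" where
  "F_box_shape F n I X g \<longleftrightarrow> finite I \<and> card I \<le> n \<and> bij_betw g I {n - card I + 1..n} \<and>
      (\<forall>s\<in>I. finite (X s) \<and> card (X s) = F (g s))"

lemma perm_box_full_shape: "F_box_shape F (card I) I X g \<Longrightarrow> perm_box F I X (PiE I X)"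
  unfolding F_box_shape_def by (intro perm_box_PiE) auto

lemma F_box_shape_top:
  assumes "F_box_shape F (Suc n) I X g" "I \<noteq> {}"
  obtains i where "i \<in> I" "g i = Suc n"
proof -
  have "card I \<noteq> 0" using assms unfolding F_box_shape_def by auto
  then have "Suc n \<in> {Suc n - card I + 1..Suc n}" by simp
  then have "Suc n \<in> g ` I" using assms(1) unfolding F_box_shape_def bij_betw_def by simp
  then obtain i where "i \<in> I" "g i = Suc n" by (auto simp: image_iff)
  then show ?thesis by (rule that)
qed

lemma F_box_shape_remove_top:
  assumes "F_box_shape F (Suc n) I X g" "i \<in> I" "g i = Suc n"
  shows "F_box_shape F n (I - {i}) X g"
proof -
  have I: "finite I" "card I \<le> Suc n" "bij_betw g I {Suc n - card I + 1..Suc n}"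
    using assms(1) unfolding F_box_shape_def by auto
  have card_I: "1 \<le> card I" "card (I - {i}) = card I - 1"
    using I(1) assms(2) by (auto simp: Suc_le_eq card_gt_0_iff)
  then have "{Suc n - card I + 1..Suc n} - {Suc n} = {n - card (I - {i}) + 1..n}"
    using I(2) by auto
  moreover have "bij_betw g (I - {i}) ({Suc n - card I + 1..Suc n} - {Suc n})"
    using assms(2,3) card_I by (intro bij_betw_DiffI[OF I(3)]) auto
  ultimately show ?thesis
    using assms(1,2) unfolding F_box_shape_def by (auto simp: card_Diff_subset)
qed

lemma F_box_shape_replace_top:
  assumes "F_box_shape F (Suc n) I X g" "i \<in> I" "g i = Suc n" "card I \<le> n"
    and "finite Y" "card Y = F (Suc n - card I)"
  shows "F_box_shape F n I (X(i := Y)) (g(i := Suc n - card I))"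
proof -
  have card_I: "1 \<le> card I" "card (I - {i}) = card I - 1"
    using assms(1,2) unfolding F_box_shape_def by (auto simp: Suc_le_eq card_gt_0_iff)
  have "bij_betw g (I - {i}) {n - card (I - {i}) + 1..n}"
    using F_box_shape_remove_top[OF assms(1-3)] unfolding F_box_shape_def by blast
  then have "bij_betw (g(i := Suc n - card I)) (insert i (I - {i}))
      (insert (Suc n - card I) {n - card (I - {i}) + 1..n})"
    using card_I assms(4) by (intro bij_betw_fun_upd_insert) auto
  moreover have "insert (Suc n - card I) {n - card (I - {i}) + 1..n} = {n - card I + 1..n}"
    using card_I assms(4) by auto
  ultimately show ?thesis
    using assms unfolding F_box_shape_def by (auto simp: insert_absorb)
qed

lemma tiles_perm_box_top_slab:
  fixes I :: "'i set" and X :: "'i \<Rightarrow> 'a set"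
  assumes IH: "\<And>(J :: 'i set) (Z :: 'i \<Rightarrow> 'a set) h.
      F_box_shape F n J Z h \<Longrightarrow> tiles (perm_box F J Z) (PiE J Z)"
    and shape: "F_box_shape F (Suc n) I X g" and i: "i \<in> I" "g i = Suc n" and "card I \<le> n"
    and Y: "Y \<subseteq> X i" "card Y = F (Suc n - card I) \<or> card Y = F (card I)"
  shows "tiles (perm_box F I X) (PiE I (X(i := Y)))"
proof -
  have fin: "finite I" "finite Y"
    using shape i Y(1) finite_subset unfolding F_box_shape_def by auto
  from Y(2) have "tiles (perm_box F I (X(i := Y))) (PiE I (X(i := Y)))"
  proof
    assume "card Y = F (Suc n - card I)"
    then have "F_box_shape F n I (X(i := Y)) (g(i := Suc n - card I))"
      by (rule F_box_shape_replace_top[OF shape i \<open>card I \<le> n\<close> \<open>finite Y\<close>])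
    then show ?thesis by (rule IH)
  next
    assume "card Y = F (card I)"
    moreover have "1 \<le> card I" using fin(1) i(1) by (auto simp: Suc_le_eq card_gt_0_iff)
    ultimately have card_Y: "card Y = F (Suc (card (I - {i})))"
      using fin(1) i(1) by simp
    have "tiles (perm_box F (I - {i}) X) (PiE (I - {i}) X)"
      using IH F_box_shape_remove_top[OF shape i] by blast
    then have "tiles (perm_box F (insert i (I - {i})) (X(i := Y)))
        (PiE (insert i (I - {i})) (X(i := Y)))"
    proof (rule tiles_PiE_insert)
      fix B assume "perm_box F (I - {i}) X B"
      then show "perm_box F (insert i (I - {i})) (X(i := Y)) ((\<lambda>(y, f). f(i := y)) ` (Y \<times> B))"
        using fin(1) card_Y by (intro perm_box_insert) auto
    qed simp
    then show ?thesis using i(1) by (simp add: insert_absorb)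
  qed
  then show ?thesis
    by (rule tiles_mono) (use Y(1) in \<open>auto elim!: perm_box_mono split: if_splits\<close>)
qed

lemma tiles_perm_box:
  assumes "lambda_decomposable F"
  shows "F_box_shape F n I X g \<Longrightarrow> tiles (perm_box F I X) (PiE I X)"
proof (induction n arbitrary: I X g)
  case 0
  then show ?case
    using perm_box_full_shape[of F I] by (auto simp: F_box_shape_def intro: tiles_singleton)
next
  case (Suc n)
  consider "I = {}" | "card I = Suc n" | "I \<noteq> {}" "card I \<le> n"
    using Suc.prems unfolding F_box_shape_def by force
  then show ?case
  proof cases
    case 1
    show ?thesis
      unfolding 1 by (intro tiles_singleton perm_box_PiE[of g]) (auto simp: bij_betw_def)
  next
    case 2
    then show ?thesis using Suc.prems perm_box_full_shape by (metis tiles_singleton)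
  next
    case 3
    define k where "k = Suc n - card I"
    obtain i where i: "i \<in> I" "g i = Suc n" using F_box_shape_top[OF Suc.prems 3(1)] .
    have fin: "finite I" "finite (X i)" "card (X i) = F (Suc n)"
      using Suc.prems i unfolding F_box_shape_def by auto
    have k: "1 \<le> k" "1 \<le> card I" "k + card I = Suc n"
      using 3 fin(1) by (auto simp: k_def Suc_le_eq card_gt_0_iff)
    obtain a b where "F (k + card I) = a * F k + b * F (card I)"
      using assms k(1,2) unfolding lambda_decomposable_def by blast
    then have "tiles (\<lambda>Y. card Y = F k \<or> card Y = F (card I)) (X i)"
      using fin k(3) by (intro tiles_card_lincomb) auto
    then show ?thesis
    proof (rule tiles_PiE_slices[OF _ i(1)])
      fix Y assume "card Y = F k \<or> card Y = F (card I)" "Y \<subseteq> X i"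
      then show "tiles (perm_box F I X) (PiE I (X(i := Y)))"
        using tiles_perm_box_top_slab[OF Suc.IH Suc.prems i 3(2)] by (simp add: k_def)
    qed
  qed
qed

lemma perm_box_imp_sub_box:
  assumes "perm_box F {1..m} (\<lambda>s. {1..F (n - m + s)}) B"
  shows "sub_box F m n B"
proof -
  obtain \<sigma> A where \<sigma>: "bij_betw \<sigma> {1..m} {1..m}"
    and A: "\<forall>s\<in>{1..m}. A s \<subseteq> {1..F (n - m + s)} \<and> card (A s) = F (\<sigma> s)" and B: "B = PiE {1..m} A"
    using assms unfolding perm_box_def by auto
  define \<tau> where "\<tau> x = (if x \<in> {1..m} then \<sigma> x else x)" for x
  have "bij_betw \<tau> {1..m} {1..m} \<longleftrightarrow> bij_betw \<sigma> {1..m} {1..m}"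
    by (rule bij_betw_cong) (simp add: \<tau>_def)
  then have "bij_betw \<tau> {1..m} {1..m}" using \<sigma> by blast
  then have "\<tau> permutes {1..m}"
    by (rule bij_imp_permutes) (auto simp: \<tau>_def)
  then show ?thesis
    unfolding sub_box_def using A B by (intro exI[of _ \<tau>] exI[of _ A]) (auto simp: \<tau>_def)
qed

lemma lambda_decomposable_imp_cobweb_tiling:
  assumes "lambda_decomposable F"
  shows "cobweb_tiling F"
proof -
  have "has_tiling F m n" if "1 \<le> m" "m \<le> n" for m n
  proof -
    have "(+) (n - m) ` {1..m} = {n - m + 1..n}"
      by (simp only: image_add_atLeastAtMost) (use that in auto)
    then have "F_box_shape F n {1..m} (\<lambda>s. {1..F (n - m + s)}) ((+) (n - m))"
      unfolding F_box_shape_def using that by auto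
    then have "tiles (perm_box F {1..m} (\<lambda>s. {1..F (n - m + s)})) (F_box F m n)"
      unfolding F_box_def by (rule tiles_perm_box[OF assms])
    then show ?thesis
      unfolding has_tiling_iff_tiles by (rule tiles_mono) (rule perm_box_imp_sub_box)
  qed
  then show ?thesis
    unfolding cobweb_tiling_def using lambda_decomposable_imp_admissible[OF assms] by blast
qed

theorem corollary6:
  shows "(\<forall>F. F \<in> T_lambda_ab \<longrightarrow> F \<in> T_lambda)
       \<and> (\<forall>F. F \<in> T_lambda_ab \<longrightarrow> cobweb_tiling F)
       \<and> fib \<in> T_lambda \<and> fib \<notin> T_lambda_ab"
proof -
  have "cobweb_tiling F" if "F \<in> T_lambda" for F
    using that lambda_decomposable_imp_cobweb_tiling by (simp add: T_lambda_iff)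
  then show ?thesis
    using T_lambda_ab_subset_T_lambda fib_in_T_lambda fib_notin_T_lambda_ab by blast
qed

end
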